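(* Let $\mu>0$, $x\ge0$, $y>0$, and for $n\ge 0$ set $$l_{\mu}^{(n)}(x,y)=\frac{\sum_{k=0}^n F_{\mu+k+1}(x,y)}{\sum_{k=0}^{n+1}F_{\mu+k}(x,y)},\qquad u_{\mu}^{(n)}(x,y)=\frac{\sum_{k=0}^n F_{\mu+k+1}(x,y)}{\sum_{k=0}^{n}F_{\mu+k}(x,y)}.$$ Then for every $n\ge 0$, $$l_{\mu}^{(n)}(x,y)<\frac{P_{\mu+1}(x,y)}{P_{\mu}(x,y)}<u_{\mu}^{(n)}(x,y),$$ and both $l_\mu^{(n)}(x,y)$ and $u_\mu^{(n)}(x,y)$ converge to $P_{\mu+1}(x,y)/P_{\mu}(x,y)$ as $n\to+\infty$. Moreover, the bounds are sharp as $x\to+\infty$, as $y\to 0^+$ and as $\mu\to+\infty$, i.e. the ratio of each bound to $P_{\mu+1}(x,y)/P_\mu(x,y)$ tends to $1$ in each of these limits.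
   Context: For $\mu>0$, $x>0$, $y\ge0$, the generalized Marcum $P$-function is $P_{\mu}(x,y)=x^{\frac12(1-\mu)}\int_0^{y} t^{\frac12(\mu-1)}e^{-t-x}I_{\mu-1}(2\sqrt{xt})\,dt$ ($I_\nu$ the modified Bessel function of the first kind); at $x=0$ it is defined by continuity, $P_\mu(0,y)=\gamma(\mu,y)/\Gamma(\mu)$. Also $F_{\mu}(x,y)=(y/x)^{\mu/2}e^{-x-y}I_{\mu}(2\sqrt{xy})$ for $x>0$, and $F_\mu(0,y)=y^\mu e^{-y}/\Gamma(\mu+1)$. *)

theory Defs
  imports "HOL-Analysis.Analysis"
begin

definition besselI :: "real \<Rightarrow> real \<Rightarrow> real" where
  "besselI \<nu> z = (\<Sum>k. (z / 2) powr (2 * real k + \<nu>) / (fact k * Gamma (real k + \<nu> + 1)))"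

definition lower_gamma :: "real \<Rightarrow> real \<Rightarrow> real" where
  "lower_gamma a y = (LBINT t=0..y. t powr (a - 1) * exp (- t))"

text \<open>Generalized Marcum P-function (with the continuity value at x = 0).\<close>
definition marcumP :: "real \<Rightarrow> real \<Rightarrow> real \<Rightarrow> real" where
  "marcumP \<mu> x y =
     (if x = 0 then lower_gamma \<mu> y / Gamma \<mu>
      else x powr ((1 - \<mu>) / 2) *
        (LBINT t=0..y. t powr ((\<mu> - 1) / 2) * exp (- t - x) * besselI (\<mu> - 1) (2 * sqrt (x * t))))"

definition marcumF :: "real \<Rightarrow> real \<Rightarrow> real \<Rightarrow> real" where
  "marcumF \<mu> x y =
     (if x = 0 then y powr \<mu> * exp (- y) / Gamma (\<mu> + 1)
      else (y / x) powr (\<mu> / 2) * exp (- x - y) * besselI \<mu> (2 * sqrt (x * y)))"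

definition lbound :: "real \<Rightarrow> real \<Rightarrow> real \<Rightarrow> nat \<Rightarrow> real" where
  "lbound \<mu> x y n = (\<Sum>k\<le>n. marcumF (\<mu> + real k + 1) x y) / (\<Sum>k\<le>n+1. marcumF (\<mu> + real k) x y)"

definition ubound :: "real \<Rightarrow> real \<Rightarrow> real \<Rightarrow> nat \<Rightarrow> real" where
  "ubound \<mu> x y n = (\<Sum>k\<le>n. marcumF (\<mu> + real k + 1) x y) / (\<Sum>k\<le>n. marcumF (\<mu> + real k) x y)"

definition marcum_ratio :: "real \<Rightarrow> real \<Rightarrow> real \<Rightarrow> real" where
  "marcum_ratio \<mu> x y = marcumP (\<mu> + 1) x y / marcumP \<mu> x y"

end

theory Submission
  imports Defs "HOL-Real_Asymp.Real_Asymp"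
begin

text \<open>Write \<open>F k\<close> for \<open>F_(\<mu>+k)(x,y)\<close> and \<open>\<rho> k = F (k+1) / F k\<close>. The derivative in \<open>t\<close>
  of \<open>exp(-t-x) t^a I_a(2 sqrt(xt)) / (xt)^(a/2)\<close> is the difference of the integrands of
  \<open>P_a\<close> and \<open>P_(a+1)\<close>, so \<open>P_a - P_(a+1) = F_a\<close>; together with \<open>0 \<le> P_a \<le> exp y F_a \<rightarrow> 0\<close>
  this gives \<open>P_\<mu> = \<Sum>k. F k\<close> and \<open>P_(\<mu>+1) = \<Sum>k. F (k+1)\<close>. The Bessel recurrence yields
  \<open>y F k = (\<mu>+k+1) F (k+1) + x F (k+2)\<close>, which forces \<open>\<rho>\<close> to decrease strictly. For any
  positive series with strictly decreasing term ratios, the two ratios of partial sums bracket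
  \<open>(\<Sum>k. F (k+1)) / (\<Sum>k. F k)\<close> with relative error at most \<open>\<rho> 0\<close>, and the recurrence bounds
  \<open>\<rho> 0\<close> by \<open>y/(\<mu>+1)\<close> and by \<open>sqrt (2y/x + 4(\<mu>+2)^2/x^2)\<close>, which vanish in the three limits.\<close>

section \<open>Series with decreasing term ratios\<close>

lemma relative_errors_le:
  fixes l R u r :: real
  assumes "0 < l" "l < R" "R < u" "u \<le> (1 + r) * l"
  shows "\<bar>l / R - 1\<bar> \<le> r" "\<bar>u / R - 1\<bar> \<le> r"
proof -
  have "0 < l * r" using assms by (simp add: algebra_simps)
  then have "0 \<le> r" using assms(1) by (simp add: zero_less_mult_iff)
  have "u - l \<le> r * l" using assms(4) by (simp add: algebra_simps)
  also have "\<dots> \<le> r * R" using assms \<open>0 \<le> r\<close> by (intro mult_left_mono) auto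
  finally have "u - l \<le> r * R" .
  then show "\<bar>l / R - 1\<bar> \<le> r" "\<bar>u / R - 1\<bar> \<le> r"
    using assms by (simp_all add: abs_if field_simps)
qed

definition term_ratio :: "(nat \<Rightarrow> real) \<Rightarrow> nat \<Rightarrow> real" where
  "term_ratio f k = f (Suc k) / f k"

locale decreasing_ratio_series =
  fixes f :: "nat \<Rightarrow> real"
  assumes pos: "\<And>k. f k > 0"
    and summable: "summable f"
    and term_ratio_decreasing: "\<And>k. term_ratio f (Suc k) < term_ratio f k"
begin

lemma term_ratio_antimono: "k \<le> n \<Longrightarrow> term_ratio f n \<le> term_ratio f k"
proof -
  have "decseq (term_ratio f)"
    using term_ratio_decreasing by (intro decseq_SucI less_imp_le)
  then show "k \<le> n \<Longrightarrow> term_ratio f n \<le> term_ratio f k" by (rule decseqD)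
qed

lemma succ_eq_term_ratio_mult: "f (Suc k) = term_ratio f k * f k"
  using pos[of k] by (simp add: term_ratio_def)

lemma suminf_eq_partial_plus_tail: "suminf f = (\<Sum>k\<le>n. f k) + (\<Sum>j. f (j + Suc n))"
  using suminf_split_initial_segment[OF summable, of "Suc n"] by (simp add: lessThan_Suc_atMost)

lemma suminf_Suc_eq: "(\<Sum>k. f (Suc k)) = suminf f - f 0"
  using suminf_split_head[OF summable] by simp

lemma tail_pos: "(\<Sum>j. f (j + m)) > 0"
  using summable pos by (intro suminf_pos) auto

lemma tail_le_term_ratio_mult: "(\<Sum>j. f (j + Suc m)) \<le> term_ratio f m * (\<Sum>j. f (j + m))"
proof -
  have shifted: "summable (\<lambda>j. f (j + m))" for m
    using summable by simp
  have "(\<Sum>j. f (j + Suc m)) = (\<Sum>j. term_ratio f (j + m) * f (j + m))"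
    using succ_eq_term_ratio_mult by simp
  also have "\<dots> \<le> (\<Sum>j. term_ratio f m * f (j + m))"
    using shifted[of "Suc m"] succ_eq_term_ratio_mult
      term_ratio_antimono pos
    by (intro suminf_le summable_mult shifted mult_right_mono) (auto intro: less_imp_le)
  also have "\<dots> = term_ratio f m * (\<Sum>j. f (j + m))"
    by (rule suminf_mult[OF shifted])
  finally show ?thesis .
qed

lemma partial_sum_ratio_less:
  "(\<Sum>k\<le>n. f (Suc k)) / (\<Sum>k\<le>Suc n. f k) < (\<Sum>k. f (Suc k)) / suminf f"
proof -
  define A where "A = (\<Sum>k\<le>n. f (Suc k))"
  define t where "t = (\<Sum>j. f (j + Suc (Suc n)))"
  have den: "(\<Sum>k\<le>Suc n. f k) = f 0 + A"
    unfolding A_def by (rule sum.atMost_Suc_shift)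
  have T: "suminf f = f 0 + A + t"
    using suminf_eq_partial_plus_tail[of "Suc n"] unfolding den t_def by simp
  have "A * suminf f < (suminf f - f 0) * (f 0 + A)"
    unfolding T using pos[of 0] tail_pos[of "Suc (Suc n)"] by (simp add: t_def algebra_simps)
  moreover have "f 0 + A > 0" unfolding A_def using pos by (intro add_pos_nonneg sum_nonneg) (auto intro: less_imp_le)
  ultimately show ?thesis
    using T pos[of 0] tail_pos[of "Suc (Suc n)"] den
    by (simp add: suminf_Suc_eq field_simps A_def t_def)
qed

text \<open>With \<open>A\<close>, \<open>B\<close> the partial sums and \<open>t m\<close> the tails: decreasing ratios give
  \<open>t (n+2) \<le> \<rho>(n+1) t (n+1) < \<rho> n t (n+1)\<close> but \<open>A \<ge> \<rho> n B\<close>.\<close>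
lemma partial_sum_ratio_greater:
  "(\<Sum>k. f (Suc k)) / suminf f < (\<Sum>k\<le>n. f (Suc k)) / (\<Sum>k\<le>n. f k)"
proof -
  define A where "A = (\<Sum>k\<le>n. f (Suc k))"
  define B where "B = (\<Sum>k\<le>n. f k)"
  define t where "t m = (\<Sum>j. f (j + m))" for m
  have B_pos: "B > 0" unfolding B_def using pos by (intro sum_pos) auto
  have T: "suminf f = B + t (Suc n)"
    unfolding B_def t_def by (rule suminf_eq_partial_plus_tail)
  have S: "(\<Sum>k. f (Suc k)) = A + t (Suc (Suc n))"
    using suminf_eq_partial_plus_tail[of "Suc n"] T sum.atMost_Suc_shift[of f "Suc n"]
    unfolding A_def B_def t_def suminf_Suc_eq by simp
  have A_ge: "term_ratio f n * B \<le> A"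
  proof -
    have "term_ratio f n * B = (\<Sum>k\<le>n. term_ratio f n * f k)" unfolding B_def by (simp add: sum_distrib_left)
    also have "\<dots> \<le> (\<Sum>k\<le>n. term_ratio f k * f k)"
      using term_ratio_antimono pos by (intro sum_mono mult_right_mono) (auto intro: less_imp_le)
    finally show ?thesis unfolding A_def succ_eq_term_ratio_mult .
  qed
  have "t (Suc (Suc n)) * B \<le> term_ratio f (Suc n) * t (Suc n) * B"
    using tail_le_term_ratio_mult[of "Suc n"] B_pos unfolding t_def by (intro mult_right_mono) auto
  also have "\<dots> < term_ratio f n * B * t (Suc n)"
    using term_ratio_decreasing[of n] tail_pos[of "Suc n"] B_pos unfolding t_def by simp
  also have "\<dots> \<le> A * t (Suc n)"
    using A_ge tail_pos[of "Suc n"] unfolding t_def by (intro mult_right_mono) auto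
  finally have "t (Suc (Suc n)) * B < A * t (Suc n)" .
  then have "(A + t (Suc (Suc n))) * B < A * (B + t (Suc n))" by (simp add: algebra_simps)
  then show ?thesis
    unfolding S T[symmetric] using B_pos T tail_pos[of "Suc n"]
    by (simp add: field_simps A_def B_def t_def)
qed

lemma partial_sum_ratio_gap:
  "(\<Sum>k\<le>n. f (Suc k)) / (\<Sum>k\<le>n. f k)
     \<le> (1 + term_ratio f 0) * ((\<Sum>k\<le>n. f (Suc k)) / (\<Sum>k\<le>Suc n. f k))"
proof -
  define A where "A = (\<Sum>k\<le>n. f (Suc k))"
  define B where "B = (\<Sum>k\<le>n. f k)"
  have B_pos: "B > 0" unfolding B_def using pos by (intro sum_pos) auto
  have "f (Suc n) \<le> term_ratio f 0 * f n"
    unfolding succ_eq_term_ratio_mult[of n]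
    using term_ratio_antimono[of 0 n] pos[of n] by (intro mult_right_mono) auto
  also have "\<dots> \<le> term_ratio f 0 * B"
    using pos unfolding B_def term_ratio_def
    by (intro mult_left_mono member_le_sum) (auto intro: less_imp_le)
  finally have "(\<Sum>k\<le>Suc n. f k) \<le> (1 + term_ratio f 0) * B"
    unfolding B_def by (simp add: algebra_simps)
  moreover have "A > 0" unfolding A_def using pos by (intro sum_pos) auto
  ultimately have "A * (\<Sum>k\<le>Suc n. f k) \<le> A * ((1 + term_ratio f 0) * B)"
    by (intro mult_left_mono) auto
  moreover have "(\<Sum>k\<le>Suc n. f k) > 0" using pos by (intro sum_pos) auto
  ultimately show ?thesis using B_pos unfolding A_def[symmetric] B_def[symmetric]
    by (simp add: field_simps)
qed

lemma suminf_gt_0: "suminf f > 0"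
  using suminf_pos[OF summable pos] .

lemma partial_sum_ratio_tendsto:
  "(\<lambda>n. (\<Sum>k\<le>n. f (Suc k)) / (\<Sum>k\<le>n. f k)) \<longlonglongrightarrow> (\<Sum>k. f (Suc k)) / suminf f"
  "(\<lambda>n. (\<Sum>k\<le>n. f (Suc k)) / (\<Sum>k\<le>Suc n. f k)) \<longlonglongrightarrow> (\<Sum>k. f (Suc k)) / suminf f"
proof -
  have num: "(\<lambda>n. \<Sum>k\<le>n. f (Suc k)) \<longlonglongrightarrow> (\<Sum>k. f (Suc k))"
    using summable_ignore_initial_segment[OF summable, of 1] by (intro summable_LIMSEQ') simp
  have den: "(\<lambda>n. \<Sum>k\<le>n. f k) \<longlonglongrightarrow> suminf f"
    using summable by (rule summable_LIMSEQ')
  show "(\<lambda>n. (\<Sum>k\<le>n. f (Suc k)) / (\<Sum>k\<le>n. f k)) \<longlonglongrightarrow> (\<Sum>k. f (Suc k)) / suminf f"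
    using suminf_gt_0 by (intro tendsto_divide num den) simp
  show "(\<lambda>n. (\<Sum>k\<le>n. f (Suc k)) / (\<Sum>k\<le>Suc n. f k)) \<longlonglongrightarrow> (\<Sum>k. f (Suc k)) / suminf f"
    using suminf_gt_0 by (intro tendsto_divide num LIMSEQ_Suc[OF den]) simp
qed

lemma partial_sum_ratio_relative_errors:
  "\<bar>(\<Sum>k\<le>n. f (Suc k)) / (\<Sum>k\<le>Suc n. f k) / ((\<Sum>k. f (Suc k)) / suminf f) - 1\<bar> \<le> term_ratio f 0"
  "\<bar>(\<Sum>k\<le>n. f (Suc k)) / (\<Sum>k\<le>n. f k) / ((\<Sum>k. f (Suc k)) / suminf f) - 1\<bar> \<le> term_ratio f 0"
proof -
  have "0 < (\<Sum>k\<le>n. f (Suc k)) / (\<Sum>k\<le>Suc n. f k)"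
    using pos by (intro divide_pos_pos sum_pos) auto
  note errors = relative_errors_le[OF this partial_sum_ratio_less partial_sum_ratio_greater
      partial_sum_ratio_gap]
  show "\<bar>(\<Sum>k\<le>n. f (Suc k)) / (\<Sum>k\<le>Suc n. f k) / ((\<Sum>k. f (Suc k)) / suminf f) - 1\<bar> \<le> term_ratio f 0"
    "\<bar>(\<Sum>k\<le>n. f (Suc k)) / (\<Sum>k\<le>n. f k) / ((\<Sum>k. f (Suc k)) / suminf f) - 1\<bar> \<le> term_ratio f 0"
    by (fact errors)+
qed

end

section \<open>A three-term recurrence forcing decreasing ratios\<close>

locale ratio_recurrence =
  fixes f :: "nat \<Rightarrow> real" and \<mu> x y :: real
  assumes pos: "\<And>k. f k > 0"
    and mu_pos: "\<mu> > 0" and x_nonneg: "x \<ge> 0" and y_pos: "y > 0"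
    and recurrence: "\<And>k. y * f k = (\<mu> + real k + 1) * f (Suc k) + x * f (Suc (Suc k))"
begin

abbreviation \<rho> :: "nat \<Rightarrow> real" where "\<rho> \<equiv> term_ratio f"

lemma rho_pos: "\<rho> k > 0"
  using pos by (simp add: term_ratio_def)

lemma x_rho_nonneg: "0 \<le> x * \<rho> k"
  using x_nonneg rho_pos[of k] by simp

lemma rho_recurrence: "\<rho> k * (\<mu> + real k + 1 + x * \<rho> (Suc k)) = y"
proof -
  have "\<rho> k * (\<mu> + real k + 1 + x * \<rho> (Suc k))
      = ((\<mu> + real k + 1) * f (Suc k) + x * f (Suc (Suc k))) / f k"
    using pos[of k] pos[of "Suc k"] by (simp add: term_ratio_def field_simps)
  also have "\<dots> = y" using pos[of k] by (simp add: recurrence[of k, symmetric])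
  finally show ?thesis .
qed

lemma rho_le: "\<rho> k * (\<mu> + real k + 1) \<le> y"
proof -
  have "\<rho> k * (\<mu> + real k + 1) \<le> \<rho> k * (\<mu> + real k + 1 + x * \<rho> (Suc k))"
    using rho_pos[of k] rho_pos[of "Suc k"] x_nonneg by (intro mult_left_mono) auto
  then show ?thesis using rho_recurrence by simp
qed

lemma rho_mult_rho_less: "x * \<rho> k * \<rho> (Suc k) < y"
proof -
  have "0 < \<rho> k * (\<mu> + real k + 1)" using rho_pos[of k] mu_pos by simp
  then show ?thesis using rho_recurrence[of k] by (simp add: algebra_simps)
qed

lemma x_rho_less_half:
  assumes "\<mu> + real k + 1 > 2 * x * y"
  shows "x * \<rho> k < 1/2"
proof -
  have "x * \<rho> k * (\<mu> + real k + 1) \<le> x * y"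
    using rho_le[of k] x_nonneg by (simp add: mult.assoc mult_left_mono)
  also have "\<dots> < 1/2 * (\<mu> + real k + 1)" using assms by simp
  finally show ?thesis using mu_pos by (simp add: mult_less_cancel_right)
qed

lemma rho_diff_identity:
  "y * (\<rho> k - \<rho> (Suc k)) = \<rho> k * \<rho> (Suc k) * (1 - x * (\<rho> (Suc k) - \<rho> (Suc (Suc k))))"
proof -
  have "y * (\<rho> k - \<rho> (Suc k)) = \<rho> k * y - \<rho> (Suc k) * y" by (simp add: algebra_simps)
  also have "\<dots> = \<rho> k * (\<rho> (Suc k) * (\<mu> + real k + 2 + x * \<rho> (Suc (Suc k))))
      - \<rho> (Suc k) * (\<rho> k * (\<mu> + real k + 1 + x * \<rho> (Suc k)))"
    using rho_recurrence[of k] rho_recurrence[of "Suc k"] by (simp add: add_ac)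
  also have "\<dots> = \<rho> k * \<rho> (Suc k) * (1 - x * (\<rho> (Suc k) - \<rho> (Suc (Suc k))))"
    by (simp add: algebra_simps)
  finally show ?thesis .
qed

text \<open>By \<open>rho_diff_identity\<close>, \<open>\<rho>\<close> decreases as soon as \<open>scaled_gap < 1\<close>. The bounds
  \<open>0 \<le> scaled_gap < 1\<close> propagate downwards through \<open>scaled_gap_recurrence\<close>, starting
  from indices so large that \<open>x \<rho> < 1/2\<close>.\<close>
definition scaled_gap :: "nat \<Rightarrow> real" where
  "scaled_gap k = x * (\<rho> k - \<rho> (Suc k))"

lemma scaled_gap_recurrence:
  "y * scaled_gap k = x * \<rho> k * \<rho> (Suc k) * (1 - scaled_gap (Suc k))"
  using arg_cong[OF rho_diff_identity[of k], of "(*) x"]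
  by (simp add: scaled_gap_def algebra_simps)

lemma scaled_gap_step:
  assumes "0 \<le> scaled_gap (Suc k)" "scaled_gap (Suc k) < 1"
  shows "0 \<le> scaled_gap k \<and> scaled_gap k < 1"
proof -
  have b: "0 \<le> x * \<rho> k * \<rho> (Suc k)"
    using x_nonneg rho_pos by (intro mult_nonneg_nonneg) (auto intro: less_imp_le)
  have "0 \<le> y * scaled_gap k" "y * scaled_gap k \<le> x * \<rho> k * \<rho> (Suc k)"
    unfolding scaled_gap_recurrence using b assms by (auto simp: mult_left_le)
  moreover have "x * \<rho> k * \<rho> (Suc k) < y" by (rule rho_mult_rho_less)
  ultimately have "0 \<le> y * scaled_gap k" "y * scaled_gap k < y * 1" by linarith+
  then show ?thesis
    using y_pos by (simp add: zero_le_mult_iff mult_less_cancel_left_pos)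
qed

lemma scaled_gap_far:
  assumes "real N \<ge> 2 * x * y"
  shows "0 \<le> scaled_gap N \<and> scaled_gap N < 1"
proof -
  have small: "0 \<le> x * \<rho> (Suc N)" "x * \<rho> (Suc N) < 1/2"
    "0 \<le> x * \<rho> (Suc (Suc N))" "x * \<rho> (Suc (Suc N)) < 1/2"
    using x_rho_less_half assms mu_pos x_rho_nonneg by auto
  then have gap: "\<bar>scaled_gap (Suc N)\<bar> < 1/2"
    unfolding scaled_gap_def right_diff_distrib abs_less_iff by linarith
  have "\<rho> N * 1 \<le> \<rho> N * (\<mu> + real N + 1)"
    using rho_pos[of N] mu_pos by (intro mult_left_mono) auto
  then have "\<rho> N \<le> y" using rho_le[of N] by simp
  then have "x * \<rho> (Suc N) * \<rho> N * (1 - scaled_gap (Suc N)) \<le> (1/2 * y) * (3/2)"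
    using small gap rho_pos[of N] y_pos by (intro mult_mono) auto
  moreover have "0 \<le> x * \<rho> (Suc N) * \<rho> N * (1 - scaled_gap (Suc N))"
    by (rule mult_nonneg_nonneg[OF mult_nonneg_nonneg[OF small(1)]]) (use gap rho_pos[of N] in auto)
  moreover have "y * scaled_gap N = x * \<rho> (Suc N) * \<rho> N * (1 - scaled_gap (Suc N))"
    using scaled_gap_recurrence[of N] by (simp add: mult_ac)
  ultimately have "0 \<le> y * scaled_gap N" "y * scaled_gap N < y * 1"
    using y_pos by linarith+
  then show ?thesis
    using y_pos by (simp add: zero_le_mult_iff mult_less_cancel_left_pos)
qed

lemma scaled_gap_bounds: "0 \<le> scaled_gap k \<and> scaled_gap k < 1"
proof -
  obtain N where N: "real N \<ge> 2 * x * y" "k \<le> N"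
    using real_arch_simple[of "2 * x * y"] by (metis nat_le_linear of_nat_le_iff order.trans)
  from N(2) show ?thesis
  proof (induction rule: inc_induct)
    case base
    show ?case using scaled_gap_far[OF N(1)] .
  next
    case (step n)
    then show ?case using scaled_gap_step by blast
  qed
qed

lemma rho_decreasing: "\<rho> (Suc k) < \<rho> k"
proof -
  have "0 < \<rho> k * \<rho> (Suc k) * (1 - scaled_gap (Suc k))"
    using rho_pos scaled_gap_bounds[of "Suc k"] by simp
  also have "\<dots> = y * (\<rho> k - \<rho> (Suc k))"
    using rho_diff_identity[of k] by (simp add: scaled_gap_def)
  finally show ?thesis using y_pos by (simp add: zero_less_mult_iff)
qed

lemma rho0_le: "\<rho> 0 \<le> y / (\<mu> + 1)"
  using rho_le[of 0] mu_pos by (simp add: field_simps)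

lemma rho0_mult_x_rho1_le: "\<rho> 0 * (x * \<rho> 1) \<le> y"
  using rho_recurrence[of 0] mu_pos mult_pos_pos[OF rho_pos[of 0], of "\<mu> + 1"]
  by (simp add: algebra_simps)

lemma y_le_rho1_bound: "x > 0 \<Longrightarrow> y \<le> \<rho> 1 * (\<mu> + 2) + \<rho> 1 * (x * \<rho> 1)"
proof -
  assume "x > 0"
  then have "\<rho> 1 * (x * \<rho> 2) \<le> \<rho> 1 * (x * \<rho> 1)"
    using rho_pos[of 1] rho_decreasing[of 1] by (intro mult_left_mono) (auto simp: numeral_2_eq_2)
  then show ?thesis
    using rho_recurrence[of 1] by (simp add: numeral_2_eq_2 algebra_simps)
qed

lemma rho0_squared_le:
  assumes "x > 0"
  shows "\<rho> 0 ^ 2 \<le> 2 * y / x + 4 * (\<mu> + 2) ^ 2 / x ^ 2"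
proof -
  let ?r0 = "\<rho> 0" and ?r1 = "\<rho> 1"
  have p: "?r0 > 0" "?r1 > 0" using rho_pos by auto
  note a = rho0_mult_x_rho1_le and b = y_le_rho1_bound[OF assms]
  show ?thesis
  proof (cases "x * ?r1 \<ge> \<mu> + 2")
    case True
    have "?r1 * (\<mu> + 2) \<le> ?r1 * (x * ?r1)" using True p by (intro mult_left_mono) auto
    then have "y / 2 \<le> x * ?r1 ^ 2" using b by (simp add: power2_eq_square mult_ac)
    then have "?r0 ^ 2 * x * (y / 2) \<le> ?r0 ^ 2 * x * (x * ?r1 ^ 2)"
      using p assms by (intro mult_left_mono) auto
    also have "\<dots> = (?r0 * (x * ?r1)) ^ 2" by (simp add: power2_eq_square)
    also have "\<dots> \<le> y ^ 2" using a p assms by (intro power_mono) auto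
    finally have "?r0 ^ 2 \<le> 2 * y / x"
      using assms y_pos by (simp add: field_simps power2_eq_square)
    moreover have "0 \<le> 4 * (\<mu> + 2) ^ 2 / x ^ 2" by simp
    ultimately show ?thesis by linarith
  next
    case False
    then have "y \<le> 2 * (\<mu> + 2) * ?r1"
      using b p mult_left_mono[of "x * ?r1" "\<mu> + 2" ?r1] by (simp add: algebra_simps)
    then have "?r0 * x * y \<le> ?r0 * x * (2 * (\<mu> + 2) * ?r1)"
      using p assms by (intro mult_left_mono) auto
    also have "\<dots> = 2 * (\<mu> + 2) * (?r0 * (x * ?r1))" by (simp add: mult_ac)
    also have "\<dots> \<le> 2 * (\<mu> + 2) * y" using a mu_pos by (intro mult_left_mono) auto
    finally have "?r0 * x \<le> 2 * (\<mu> + 2)" using y_pos by simp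
    then have "(?r0 * x) ^ 2 \<le> (2 * (\<mu> + 2)) ^ 2" using p assms by (intro power_mono) auto
    then have "?r0 ^ 2 * x ^ 2 \<le> 4 * (\<mu> + 2) ^ 2" by (simp only: power_mult_distrib) simp
    then have "?r0 ^ 2 \<le> 4 * (\<mu> + 2) ^ 2 / x ^ 2"
      using assms by (simp add: field_simps)
    moreover have "0 \<le> 2 * y / x" using assms y_pos by simp
    ultimately show ?thesis by linarith
  qed
qed

end

section \<open>The series of the modified Bessel function\<close>

lemma Gamma_plus1_pos: "z > 0 \<Longrightarrow> Gamma (z + 1) = z * Gamma (z::real)"
  by (rule Gamma_plus1) auto

definition bessel_coeff :: "real \<Rightarrow> nat \<Rightarrow> real" where
  "bessel_coeff s n = 1 / (fact n * Gamma (real n + s + 1))"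

text \<open>The entire factor in \<open>I_s(2 sqrt w) = w^(s/2) bessel_series s w\<close>; working with it
  keeps fractional powers out of the recurrences and covers \<open>x = 0\<close> uniformly.\<close>
definition bessel_series :: "real \<Rightarrow> real \<Rightarrow> real" where
  "bessel_series s w = (\<Sum>n. bessel_coeff s n * w ^ n)"

lemma bessel_coeff_pos: "s > -1 \<Longrightarrow> bessel_coeff s n > 0"
  unfolding bessel_coeff_def by simp

lemma bessel_coeff_Suc:
  assumes "s > -1"
  shows "bessel_coeff s (Suc n) = bessel_coeff s n / ((real n + 1) * (real n + s + 1))"
  using Gamma_plus1_pos[of "real n + s + 1"] assms
  by (simp add: bessel_coeff_def add_ac)

lemma summable_bessel_series:
  assumes "s > -1"
  shows "summable (\<lambda>n. bessel_coeff s n * w ^ n)"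
proof (rule summable_ratio_test[where c="1/2" and N="Suc (nat \<lceil>2 * \<bar>w\<bar>\<rceil>)"])
  fix n assume n: "n \<ge> Suc (nat \<lceil>2 * \<bar>w\<bar>\<rceil>)"
  have pos: "bessel_coeff s n > 0" using bessel_coeff_pos assms by auto
  have "2 * \<bar>w\<bar> \<le> real n * 1" using n by linarith
  also have "\<dots> \<le> (real n + 1) * (real n + s + 1)"
    using assms n by (intro mult_mono) auto
  moreover have "(real n + 1) * (real n + s + 1) > 0" using assms by simp
  ultimately have d: "\<bar>w\<bar> / ((real n + 1) * (real n + s + 1)) \<le> 1/2"
    by (simp add: divide_le_eq)
  have "norm (bessel_coeff s (Suc n) * w ^ Suc n)
      = norm (bessel_coeff s n * w ^ n) * (\<bar>w\<bar> / ((real n + 1) * (real n + s + 1)))"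
    using pos assms by (simp add: bessel_coeff_Suc abs_mult power_abs)
  also have "\<dots> \<le> norm (bessel_coeff s n * w ^ n) * (1/2)"
    using d by (intro mult_left_mono) auto
  finally show "norm (bessel_coeff s (Suc n) * w ^ Suc n) \<le> 1/2 * norm (bessel_coeff s n * w ^ n)"
    by simp
qed simp

lemma diffs_bessel_coeff: "s > -1 \<Longrightarrow> diffs (bessel_coeff s) = bessel_coeff (s + 1)"
proof
  fix n
  have "Gamma (real (Suc n) + s + 1) = Gamma (real n + (s + 1) + 1)" by (simp add: add_ac)
  then show "diffs (bessel_coeff s) n = bessel_coeff (s + 1) n"
    by (simp add: diffs_def bessel_coeff_def del: of_nat_Suc)
qed

lemma bessel_coeff_pred: "s > 0 \<Longrightarrow> bessel_coeff (s - 1) n = (real n + s) * bessel_coeff s n"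
  using Gamma_plus1_pos[of "real n + s"] by (simp add: bessel_coeff_def)

lemma bessel_series_has_derivative:
  assumes "s > -1"
  shows "(bessel_series s has_real_derivative bessel_series (s + 1) w) (at w)"
proof -
  have "((\<lambda>w. \<Sum>n. bessel_coeff s n * w ^ n) has_field_derivative
      (\<Sum>n. diffs (bessel_coeff s) n * w ^ n)) (at w)"
    by (rule termdiffs_strong_converges_everywhere) (use summable_bessel_series assms in auto)
  then show ?thesis unfolding bessel_series_def[abs_def] diffs_bessel_coeff[OF assms] .
qed

lemma isCont_bessel_series: "s > -1 \<Longrightarrow> isCont (bessel_series s) w"
  using bessel_series_has_derivative DERIV_isCont by blast

lemma bessel_series_pos:
  assumes "s > -1" "w \<ge> 0"
  shows "bessel_series s w > 0"
proof -
  have "0 \<le> bessel_coeff s n * w ^ n" for n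
    using bessel_coeff_pos[OF assms(1)] assms(2) by (simp add: less_imp_le)
  moreover have "0 < bessel_coeff s 0 * w ^ 0" using bessel_coeff_pos[OF assms(1)] by simp
  ultimately show ?thesis
    unfolding bessel_series_def using suminf_pos_iff[OF summable_bessel_series[OF assms(1)]] by blast
qed

lemma bessel_series_0: "bessel_series s 0 = 1 / Gamma (s + 1)"
  unfolding bessel_series_def using powser_zero[of "bessel_coeff s"] by (simp add: bessel_coeff_def)

lemma bessel_series_recurrence:
  assumes "s > 0"
  shows "bessel_series (s - 1) w = s * bessel_series s w + w * bessel_series (s + 1) w"
proof -
  have s: "s > -1" "s + 1 > -1" using assms by auto
  have "(\<lambda>n. w * (bessel_coeff (s + 1) n * w ^ n)) sums (w * bessel_series (s + 1) w)"
    unfolding bessel_series_def by (intro sums_mult summable_sums summable_bessel_series s)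
  moreover have "w * (bessel_coeff (s + 1) n * w ^ n) = real (Suc n) * bessel_coeff s (Suc n) * w ^ Suc n" for n
    using diffs_bessel_coeff[OF s(1)] unfolding diffs_def by (auto simp: fun_eq_iff)
  ultimately have "(\<lambda>n. real n * bessel_coeff s n * w ^ n) sums (w * bessel_series (s + 1) w)"
    using sums_Suc_iff[of "\<lambda>n. real n * bessel_coeff s n * w ^ n"] by simp
  moreover have "(\<lambda>n. s * (bessel_coeff s n * w ^ n)) sums (s * bessel_series s w)"
    unfolding bessel_series_def by (intro sums_mult summable_sums summable_bessel_series s)
  ultimately have "(\<lambda>n. s * (bessel_coeff s n * w ^ n) + real n * bessel_coeff s n * w ^ n)
      sums (s * bessel_series s w + w * bessel_series (s + 1) w)"
    by (intro sums_add)
  then have "(\<lambda>n. bessel_coeff (s - 1) n * w ^ n) sums (s * bessel_series s w + w * bessel_series (s + 1) w)"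
    using bessel_coeff_pred[OF assms] by (simp add: algebra_simps)
  then show ?thesis unfolding bessel_series_def by (simp add: sums_iff)
qed

lemma besselI_eq_bessel_series:
  assumes "w > 0" "\<nu> > -1"
  shows "besselI \<nu> (2 * sqrt w) = w powr (\<nu> / 2) * bessel_series \<nu> w"
proof -
  have "sqrt w powr (2 * real k + \<nu>) = w powr (\<nu> / 2) * w ^ k" for k
  proof -
    have "sqrt w powr (2 * real k + \<nu>) = w powr (real k + \<nu> / 2)"
      using assms by (simp add: powr_half_sqrt[symmetric] powr_powr field_simps)
    also have "\<dots> = w powr (\<nu> / 2) * w ^ k" using assms by (simp add: powr_add powr_realpow)
    finally show ?thesis .
  qed
  then have "besselI \<nu> (2 * sqrt w) = (\<Sum>k. w powr (\<nu> / 2) * (bessel_coeff \<nu> k * w ^ k))"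
    unfolding besselI_def bessel_coeff_def by simp
  also have "\<dots> = w powr (\<nu> / 2) * bessel_series \<nu> w"
    unfolding bessel_series_def by (rule suminf_mult[OF summable_bessel_series[OF assms(2)]])
  finally show ?thesis .
qed

section \<open>Integral representations of the Marcum functions\<close>

definition marcum_kernel :: "real \<Rightarrow> real \<Rightarrow> real \<Rightarrow> real" where
  "marcum_kernel x a t = t powr a * bessel_series a (x * t)"

lemma marcumF_eq_kernel:
  assumes "x \<ge> 0" "y > 0" "a > -1"
  shows "marcumF a x y = exp (- x - y) * marcum_kernel x a y"
proof (cases "x = 0")
  case True
  then show ?thesis by (simp add: marcumF_def marcum_kernel_def bessel_series_0)
next
  case False
  then have xy: "x > 0" "x * y > 0" using assms by auto
  have "(y / x) powr (a / 2) * (x * y) powr (a / 2) = (y * y) powr (a / 2)"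
    using xy by (simp add: powr_mult[symmetric])
  also have "\<dots> = y powr a"
    using assms by (simp add: powr_mult powr_add[symmetric])
  finally show ?thesis
    using besselI_eq_bessel_series[OF xy(2) assms(3)] False
    by (simp add: marcumF_def marcum_kernel_def mult_ac)
qed

lemma marcumP_eq_integral:
  assumes "x \<ge> 0" "y > 0" "a > 0"
  shows "marcumP a x y = (LBINT t=0..y. exp (- t - x) * marcum_kernel x (a - 1) t)"
proof (cases "x = 0")
  case True
  then show ?thesis
    by (simp add: marcumP_def lower_gamma_def marcum_kernel_def bessel_series_0 mult_ac)
next
  case False
  then have x: "x > 0" using assms by simp
  have "marcumP a x y = (LBINT t=0..y. x powr ((1 - a) / 2) * (t powr ((a - 1) / 2) *
      exp (- t - x) * besselI (a - 1) (2 * sqrt (x * t))))"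
    using False by (simp add: marcumP_def)
  also have "\<dots> = (LBINT t=0..y. exp (- t - x) * marcum_kernel x (a - 1) t)"
  proof (rule interval_integral_cong)
    fix t assume "t \<in> einterval (min 0 (ereal y)) (max 0 (ereal y))"
    then have t: "t > 0" "x * t > 0" using assms x by (auto simp: einterval_def min_def max_def)
    have "x powr ((1 - a) / 2) * (t powr ((a - 1) / 2) * (x * t) powr ((a - 1) / 2))
        = (x powr ((1 - a) / 2) * x powr ((a - 1) / 2)) * (t powr ((a - 1) / 2) * t powr ((a - 1) / 2))"
      using t by (simp add: powr_mult)
    also have "x powr ((1 - a) / 2) * x powr ((a - 1) / 2) = 1"
      using x by (simp add: powr_add[symmetric] field_simps)
    also have "t powr ((a - 1) / 2) * t powr ((a - 1) / 2) = t powr (a - 1)"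
      by (simp add: powr_add[symmetric])
    finally show "x powr ((1 - a) / 2) * (t powr ((a - 1) / 2) * exp (- t - x) *
        besselI (a - 1) (2 * sqrt (x * t))) = exp (- t - x) * marcum_kernel x (a - 1) t"
      using besselI_eq_bessel_series[OF t(2), of "a - 1"] assms
      by (simp add: marcum_kernel_def mult_ac)
  qed
  finally show ?thesis .
qed

lemma isCont_marcum_kernel:
  assumes "t > 0" "a > -1"
  shows "isCont (marcum_kernel x a) t"
  unfolding marcum_kernel_def[abs_def] using assms
  by (intro continuous_intros isCont_o2[OF _ isCont_bessel_series]) auto

lemma marcum_kernel_tendsto_at_left:
  "y > 0 \<Longrightarrow> a > -1 \<Longrightarrow> (marcum_kernel x a \<longlongrightarrow> marcum_kernel x a y) (at_left y)"
  using isCont_marcum_kernel by (auto simp: isCont_def intro: tendsto_within_subset)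

lemma marcum_kernel_nonneg: "x \<ge> 0 \<Longrightarrow> t \<ge> 0 \<Longrightarrow> a > -1 \<Longrightarrow> marcum_kernel x a t \<ge> 0"
  unfolding marcum_kernel_def using bessel_series_pos[of a "x * t"] by (simp add: less_imp_le)

lemma marcum_kernel_pos: "x \<ge> 0 \<Longrightarrow> t > 0 \<Longrightarrow> a > -1 \<Longrightarrow> marcum_kernel x a t > 0"
  unfolding marcum_kernel_def using bessel_series_pos[of a "x * t"] by simp

lemma marcum_kernel_has_derivative:
  assumes "t > 0" "a > 0"
  shows "(marcum_kernel x a has_real_derivative marcum_kernel x (a - 1) t) (at t)"
proof -
  have "((\<lambda>t. t powr a * bessel_series a (x * t)) has_real_derivative
      a * t powr (a - 1) * bessel_series a (x * t) + t powr a * (bessel_series (a + 1) (x * t) * x)) (at t)"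
    using assms
    by (auto intro!: derivative_eq_intros DERIV_chain2[OF bessel_series_has_derivative])
  moreover have "a * t powr (a - 1) * bessel_series a (x * t) + t powr a * (bessel_series (a + 1) (x * t) * x)
      = marcum_kernel x (a - 1) t"
  proof -
    have "t powr a = t powr (a - 1) * t" using powr_add[of t "a - 1" 1] assms(1) by simp
    then show ?thesis
      using bessel_series_recurrence[OF assms(2), of "x * t"]
      by (simp add: marcum_kernel_def algebra_simps)
  qed
  ultimately show ?thesis unfolding marcum_kernel_def[abs_def] by simp
qed

lemma marcum_kernel_tendsto_0:
  assumes "a > 0"
  shows "(marcum_kernel x a \<longlongrightarrow> 0) (at_right 0)"
proof -
  have "((\<lambda>t. t powr a) \<longlongrightarrow> 0) (at_right 0)"
    using assms by (intro tendsto_zero_powrI tendsto_ident_at eventually_at_rightI[of 0 1]) auto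
  moreover have "((\<lambda>t. bessel_series a (x * t)) \<longlongrightarrow> bessel_series a (x * 0)) (at_right 0)"
    using assms by (intro tendsto_intros isCont_tendsto_compose[OF isCont_bessel_series]) auto
  ultimately show ?thesis
    unfolding marcum_kernel_def[abs_def] using tendsto_mult by fastforce
qed

lemma tendsto_at_right_0_ereal:
  "(g \<longlongrightarrow> c) (at_right 0) \<Longrightarrow> ((g \<circ> real_of_ereal) \<longlongrightarrow> c) (at_right (0::ereal))"
  using ereal_tendsto_simps1(2)[of g c 0] by (simp add: zero_ereal_def)

lemma tendsto_at_left_ereal:
  "(g \<longlongrightarrow> c) (at_left y) \<Longrightarrow> ((g \<circ> real_of_ereal) \<longlongrightarrow> c) (at_left (ereal y))"
  using ereal_tendsto_simps1(1)[of g c y] by simp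

lemma marcum_kernel_integral:
  assumes "x \<ge> 0" "y > 0" "a > 0"
  shows "set_integrable lborel (einterval 0 (ereal y)) (marcum_kernel x (a - 1))"
    and "(LBINT t=0..y. marcum_kernel x (a - 1) t) = marcum_kernel x a y"
proof -
  have y: "0 < ereal y" using assms by simp
  have deriv: "(marcum_kernel x a has_real_derivative marcum_kernel x (a - 1) t) (at t)"
    and cont: "isCont (marcum_kernel x (a - 1)) t" if "0 < ereal t" for t
    using that assms by (auto intro!: marcum_kernel_has_derivative isCont_marcum_kernel)
  have nonneg: "AE t in lborel. 0 < ereal t \<longrightarrow> ereal t < ereal y \<longrightarrow> 0 \<le> marcum_kernel x (a - 1) t"
    using assms by (auto intro!: marcum_kernel_nonneg)
  have at_0: "(((marcum_kernel x a) \<circ> real_of_ereal) \<longlongrightarrow> 0) (at_right 0)"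
    by (intro tendsto_at_right_0_ereal marcum_kernel_tendsto_0 assms)
  have at_y: "(((marcum_kernel x a) \<circ> real_of_ereal) \<longlongrightarrow> marcum_kernel x a y) (at_left (ereal y))"
    using assms by (intro tendsto_at_left_ereal marcum_kernel_tendsto_at_left) auto
  note FTC = interval_integral_FTC_nonneg[OF y deriv cont nonneg at_0 at_y]
  show "set_integrable lborel (einterval 0 (ereal y)) (marcum_kernel x (a - 1))"
    "(LBINT t=0..y. marcum_kernel x (a - 1) t) = marcum_kernel x a y"
    using FTC by simp_all
qed

lemma LBINT_0_eq_set_integral:
  "y > 0 \<Longrightarrow> (LBINT t=0..y. g t) = (LINT t:einterval 0 (ereal y)|lborel. g t)"
  by (simp add: interval_lebesgue_integral_def)

lemma isCont_marcumP_integrand: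
  "t > 0 \<Longrightarrow> a > 0 \<Longrightarrow> isCont (\<lambda>t. exp (- t - x) * marcum_kernel x (a - 1) t) t"
  using isCont_marcum_kernel[of t "a - 1" x] by (intro isCont_mult) (auto intro!: continuous_intros)

lemma marcumP_integrand_integrable:
  assumes "x \<ge> 0" "y > 0" "a > 0"
  shows "set_integrable lborel (einterval 0 (ereal y)) (\<lambda>t. exp (- t - x) * marcum_kernel x (a - 1) t)"
proof (rule set_integrable_bound)
  show "set_integrable lborel (einterval 0 (ereal y)) (\<lambda>t. exp (- x) * marcum_kernel x (a - 1) t)"
    using marcum_kernel_integral(1)[OF assms] by simp
  show "set_borel_measurable lborel (einterval 0 (ereal y)) (\<lambda>t. exp (- t - x) * marcum_kernel x (a - 1) t)"
    unfolding set_borel_measurable_def using assms isCont_marcumP_integrand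
    by (auto simp del: real_scaleR_def simp: continuous_on_eq_continuous_at einterval_iff
        intro!: borel_measurable_continuous_on_indicator)
  show "AE t in lborel. t \<in> einterval 0 (ereal y) \<longrightarrow>
      norm (exp (- t - x) * marcum_kernel x (a - 1) t) \<le> norm (exp (- x) * marcum_kernel x (a - 1) t)"
  proof (rule AE_I2, rule impI)
    fix t assume "t \<in> einterval 0 (ereal y)"
    then have "t > 0" by (simp add: einterval_iff)
    then have "0 \<le> marcum_kernel x (a - 1) t" "exp (- t - x) \<le> exp (- x)"
      using assms by (simp_all add: marcum_kernel_nonneg)
    then show "norm (exp (- t - x) * marcum_kernel x (a - 1) t) \<le> norm (exp (- x) * marcum_kernel x (a - 1) t)"
      by (simp add: abs_mult mult_right_mono)
  qed
qed

lemma marcumP_nonneg: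
  assumes "x \<ge> 0" "y > 0" "a > 0"
  shows "marcumP a x y \<ge> 0"
proof -
  have "0 \<le> (LINT t:einterval 0 (ereal y)|lborel. exp (- t - x) * marcum_kernel x (a - 1) t)"
    unfolding set_lebesgue_integral_def using assms
    by (intro integral_nonneg_AE AE_I2)
      (auto simp: indicator_def einterval_iff intro!: mult_nonneg_nonneg marcum_kernel_nonneg)
  then show ?thesis using assms by (simp add: marcumP_eq_integral LBINT_0_eq_set_integral)
qed

lemma marcumP_le_exp_marcumF:
  assumes "x \<ge> 0" "y > 0" "a > 0"
  shows "marcumP a x y \<le> exp y * marcumF a x y"
proof -
  have "marcumP a x y = (LINT t:einterval 0 (ereal y)|lborel. exp (- t - x) * marcum_kernel x (a - 1) t)"
    using assms by (simp add: marcumP_eq_integral LBINT_0_eq_set_integral)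
  also have "\<dots> \<le> (LINT t:einterval 0 (ereal y)|lborel. exp (- x) * marcum_kernel x (a - 1) t)"
  proof (rule set_integral_mono)
    show "set_integrable lborel (einterval 0 (ereal y)) (\<lambda>t. exp (- x) * marcum_kernel x (a - 1) t)"
      using marcum_kernel_integral(1)[OF assms] by simp
    fix t assume "t \<in> einterval 0 (ereal y)"
    then have "t > 0" by (simp add: einterval_iff)
    then have "0 \<le> marcum_kernel x (a - 1) t" "exp (- t - x) \<le> exp (- x)"
      using assms by (simp_all add: marcum_kernel_nonneg)
    then show "exp (- t - x) * marcum_kernel x (a - 1) t \<le> exp (- x) * marcum_kernel x (a - 1) t"
      by (simp add: mult_right_mono)
  qed (rule marcumP_integrand_integrable[OF assms])
  also have "\<dots> = exp (- x) * marcum_kernel x a y"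
    using marcum_kernel_integral(2)[OF assms] assms by (simp add: LBINT_0_eq_set_integral)
  also have "\<dots> = exp y * marcumF a x y"
    using assms by (simp add: marcumF_eq_kernel exp_diff exp_minus field_simps)
  finally show ?thesis .
qed

lemma exp_marcum_kernel_has_derivative:
  assumes "t > 0" "a > 0"
  shows "((\<lambda>t. exp (- t - x) * marcum_kernel x a t) has_real_derivative
    exp (- t - x) * marcum_kernel x (a - 1) t - exp (- t - x) * marcum_kernel x a t) (at t)"
proof -
  have exp: "((\<lambda>t. exp (- t - x)) has_real_derivative - exp (- t - x)) (at t)"
    by (auto intro!: derivative_eq_intros)
  show ?thesis
    using DERIV_mult[OF exp marcum_kernel_has_derivative[OF assms]] by (simp add: algebra_simps)
qed

lemma exp_marcum_kernel_tendsto_0: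
  assumes "a > 0"
  shows "((\<lambda>t. exp (- t - x) * marcum_kernel x a t) \<longlongrightarrow> 0) (at_right 0)"
proof -
  have "((\<lambda>t. exp (- t - x)) \<longlongrightarrow> exp (- 0 - x)) (at_right 0)" by (intro tendsto_intros)
  from tendsto_mult[OF this marcum_kernel_tendsto_0[OF assms]] show ?thesis by simp
qed

lemma marcumP_diff:
  assumes "x \<ge> 0" "y > 0" "a > 0"
  shows "marcumP a x y - marcumP (a + 1) x y = marcumF a x y"
proof -
  define g where "g t = exp (- t - x) * marcum_kernel x (a - 1) t - exp (- t - x) * marcum_kernel x a t" for t
  have int: "set_integrable lborel (einterval 0 (ereal y)) (\<lambda>t. exp (- t - x) * marcum_kernel x (a - 1) t)"
    "set_integrable lborel (einterval 0 (ereal y)) (\<lambda>t. exp (- t - x) * marcum_kernel x (a + 1 - 1) t)"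
    using assms by (intro marcumP_integrand_integrable; simp)+
  have "marcumP a x y - marcumP (a + 1) x y = (LBINT t=0..y. g t)"
    using assms set_integral_diff(2)[OF int]
    by (simp add: marcumP_eq_integral LBINT_0_eq_set_integral g_def)
  also have "\<dots> = exp (- y - x) * marcum_kernel x a y - 0"
  proof (rule interval_integral_FTC_integrable)
    fix t assume t: "0 < ereal t" "ereal t < ereal y"
    show "((\<lambda>t. exp (- t - x) * marcum_kernel x a t) has_vector_derivative g t) (at t)"
      unfolding has_real_derivative_iff_has_vector_derivative[symmetric] g_def
      using t assms by (intro exp_marcum_kernel_has_derivative) auto
    show "isCont g t"
      unfolding g_def using t assms isCont_marcumP_integrand[of t a] isCont_marcumP_integrand[of t "a + 1"]
      by (intro isCont_diff) auto
  next
    show "set_integrable lborel (einterval 0 (ereal y)) g"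
      unfolding g_def using set_integral_diff(1)[OF int] by simp
    show "(((\<lambda>t. exp (- t - x) * marcum_kernel x a t) \<circ> real_of_ereal) \<longlongrightarrow> 0) (at_right 0)"
      using assms by (intro tendsto_at_right_0_ereal exp_marcum_kernel_tendsto_0)
    show "(((\<lambda>t. exp (- t - x) * marcum_kernel x a t) \<circ> real_of_ereal) \<longlongrightarrow>
        exp (- y - x) * marcum_kernel x a y) (at_left (ereal y))"
      using assms by (intro tendsto_at_left_ereal tendsto_mult tendsto_intros marcum_kernel_tendsto_at_left) auto
  qed (use assms in simp)
  also have "\<dots> = marcumF a x y"
    using assms by (simp add: marcumF_eq_kernel algebra_simps)
  finally show ?thesis .
qed

section \<open>The Marcum ratio bounds\<close>

locale marcum_parameters =
  fixes \<mu> x y :: real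
  assumes mu_pos: "\<mu> > 0" and x_nonneg: "x \<ge> 0" and y_pos: "y > 0"
begin

definition F :: "nat \<Rightarrow> real" where
  "F k = marcumF (\<mu> + real k) x y"

lemma F_eq_bessel_series: "F k = exp (- x - y) * (y powr (\<mu> + real k) * bessel_series (\<mu> + real k) (x * y))"
  using marcumF_eq_kernel[OF x_nonneg y_pos, of "\<mu> + real k"] mu_pos
  by (simp add: F_def marcum_kernel_def)

lemma F_pos: "F k > 0"
  using marcumF_eq_kernel[OF x_nonneg y_pos, of "\<mu> + real k"] mu_pos
    marcum_kernel_pos[OF x_nonneg y_pos, of "\<mu> + real k"]
  by (simp add: F_def)

lemma F_recurrence: "y * F k = (\<mu> + real k + 1) * F (Suc k) + x * F (Suc (Suc k))"
proof -
  define s where "s = \<mu> + real k + 1"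
  have s: "s > 0" "\<mu> + real k = s - 1" "\<mu> + real (Suc k) = s" "\<mu> + real (Suc (Suc k)) = s + 1"
    using mu_pos by (simp_all add: s_def)
  have "y * F k = exp (- x - y) * ((y * y powr (s - 1)) * bessel_series (s - 1) (x * y))"
    unfolding F_eq_bessel_series s(2) by (simp add: mult_ac)
  also have "\<dots> = exp (- x - y) * (y powr s * (s * bessel_series s (x * y) + x * y * bessel_series (s + 1) (x * y)))"
    using y_pos powr_add[of y "s - 1" 1] bessel_series_recurrence[OF s(1), of "x * y"] by simp
  also have "\<dots> = s * F (Suc k) + x * F (Suc (Suc k))"
    using y_pos powr_add[of y s 1] unfolding F_eq_bessel_series s(3,4) by (simp add: algebra_simps)
  finally show ?thesis by (simp add: s_def)
qed

lemma marcumP_eq_partial_sum: "marcumP \<mu> x y = sum F {..<K} + marcumP (\<mu> + real K) x y"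
proof (induction K)
  case (Suc K)
  have "marcumP (\<mu> + real K) x y - marcumP (\<mu> + real K + 1) x y = F K"
    using marcumP_diff[OF x_nonneg y_pos, of "\<mu> + real K"] mu_pos by (simp add: F_def)
  with Suc show ?case by (simp add: add_ac)
qed simp

lemma F_sums: "F sums marcumP \<mu> x y"
proof -
  have nonneg: "0 \<le> marcumP (\<mu> + real K) x y" for K
    using marcumP_nonneg[OF x_nonneg y_pos, of "\<mu> + real K"] mu_pos by simp
  have "summable F"
  proof (rule summableI_nonneg_bounded)
    show "0 \<le> F k" for k using F_pos[of k] by simp
    show "sum F {..<K} \<le> marcumP \<mu> x y" for K
      using marcumP_eq_partial_sum[of K] nonneg[of K] by linarith
  qed
  then have F_lim: "(\<lambda>K. exp y * F K) \<longlonglongrightarrow> 0"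
    by (intro tendsto_mult_right_zero summable_LIMSEQ_zero)
  have le: "marcumP (\<mu> + real K) x y \<le> exp y * F K" for K
    using marcumP_le_exp_marcumF[OF x_nonneg y_pos, of "\<mu> + real K"] mu_pos by (simp add: F_def)
  have "(\<lambda>K. marcumP (\<mu> + real K) x y) \<longlonglongrightarrow> 0"
    by (rule tendsto_sandwich[OF always_eventually always_eventually tendsto_const F_lim])
      (use nonneg le in blast)+
  from tendsto_diff[OF tendsto_const this]
  have "(\<lambda>K. marcumP \<mu> x y - marcumP (\<mu> + real K) x y) \<longlonglongrightarrow> marcumP \<mu> x y"
    by simp
  moreover have "marcumP \<mu> x y - marcumP (\<mu> + real K) x y = sum F {..<K}" for K
    using marcumP_eq_partial_sum[of K] by simp
  ultimately show ?thesis unfolding sums_def by simp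
qed

sublocale ratio_recurrence F \<mu> x y
  by (rule ratio_recurrence.intro) (fact F_pos mu_pos x_nonneg y_pos F_recurrence)+

sublocale decreasing_ratio_series F
proof
  show "summable F" using F_sums by (rule sums_summable)
qed (fact F_pos rho_decreasing)+

lemma marcum_ratio_eq: "marcum_ratio \<mu> x y = (\<Sum>k. F (Suc k)) / suminf F"
proof -
  have "marcumP (\<mu> + 1) x y = marcumP \<mu> x y - F 0"
    using marcumP_diff[OF x_nonneg y_pos mu_pos] by (simp add: F_def)
  then show ?thesis using F_sums by (simp add: marcum_ratio_def suminf_Suc_eq sums_iff)
qed

lemma lbound_eq: "lbound \<mu> x y n = (\<Sum>k\<le>n. F (Suc k)) / (\<Sum>k\<le>Suc n. F k)"
  by (simp add: lbound_def F_def add_ac)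

lemma ubound_eq: "ubound \<mu> x y n = (\<Sum>k\<le>n. F (Suc k)) / (\<Sum>k\<le>n. F k)"
  by (simp add: ubound_def F_def add_ac)

lemma marcumF_ratio_eq: "marcumF (\<mu> + 1) x y / marcumF \<mu> x y = term_ratio F 0"
  by (simp add: term_ratio_def F_def)

lemma marcumF_ratio_pos: "marcumF (\<mu> + 1) x y / marcumF \<mu> x y > 0"
  unfolding marcumF_ratio_eq by (rule rho_pos)

lemma marcumF_ratio_le: "marcumF (\<mu> + 1) x y / marcumF \<mu> x y \<le> y / (\<mu> + 1)"
  unfolding marcumF_ratio_eq by (rule rho0_le)

lemma marcumF_ratio_le_sqrt:
  "x > 0 \<Longrightarrow> marcumF (\<mu> + 1) x y / marcumF \<mu> x y \<le> sqrt (2 * y / x + 4 * (\<mu> + 2) ^ 2 / x ^ 2)"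
  unfolding marcumF_ratio_eq by (intro real_le_rsqrt rho0_squared_le)

lemma marcum_ratio_bounds: "lbound \<mu> x y n < marcum_ratio \<mu> x y" "marcum_ratio \<mu> x y < ubound \<mu> x y n"
  unfolding lbound_eq ubound_eq marcum_ratio_eq
  by (rule partial_sum_ratio_less partial_sum_ratio_greater)+

lemma bounds_tendsto_marcum_ratio:
  "(\<lambda>n. lbound \<mu> x y n) \<longlonglongrightarrow> marcum_ratio \<mu> x y" "(\<lambda>n. ubound \<mu> x y n) \<longlonglongrightarrow> marcum_ratio \<mu> x y"
  unfolding lbound_eq ubound_eq marcum_ratio_eq by (rule partial_sum_ratio_tendsto)+

lemma bounds_relative_errors:
  "\<bar>lbound \<mu> x y n / marcum_ratio \<mu> x y - 1\<bar> \<le> marcumF (\<mu> + 1) x y / marcumF \<mu> x y"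
  "\<bar>ubound \<mu> x y n / marcum_ratio \<mu> x y - 1\<bar> \<le> marcumF (\<mu> + 1) x y / marcumF \<mu> x y"
  unfolding lbound_eq ubound_eq marcum_ratio_eq marcumF_ratio_eq
  by (rule partial_sum_ratio_relative_errors)+

end

lemma bounds_ratio_tendsto_1:
  fixes \<mu> x y :: "'a \<Rightarrow> real"
  assumes "eventually (\<lambda>p. \<mu> p > 0 \<and> x p \<ge> 0 \<and> y p > 0) G"
    and "((\<lambda>p. marcumF (\<mu> p + 1) (x p) (y p) / marcumF (\<mu> p) (x p) (y p)) \<longlongrightarrow> 0) G"
  shows "((\<lambda>p. lbound (\<mu> p) (x p) (y p) n / marcum_ratio (\<mu> p) (x p) (y p)) \<longlongrightarrow> 1) G"
    and "((\<lambda>p. ubound (\<mu> p) (x p) (y p) n / marcum_ratio (\<mu> p) (x p) (y p)) \<longlongrightarrow> 1) G"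
proof -
  have errors: "eventually (\<lambda>p.
      \<bar>lbound (\<mu> p) (x p) (y p) n / marcum_ratio (\<mu> p) (x p) (y p) - 1\<bar>
        \<le> marcumF (\<mu> p + 1) (x p) (y p) / marcumF (\<mu> p) (x p) (y p) \<and>
      \<bar>ubound (\<mu> p) (x p) (y p) n / marcum_ratio (\<mu> p) (x p) (y p) - 1\<bar>
        \<le> marcumF (\<mu> p + 1) (x p) (y p) / marcumF (\<mu> p) (x p) (y p)) G"
    using assms(1) by eventually_elim (simp add: marcum_parameters.bounds_relative_errors marcum_parameters.intro)
  have "((\<lambda>p. lbound (\<mu> p) (x p) (y p) n / marcum_ratio (\<mu> p) (x p) (y p) - 1) \<longlongrightarrow> 0) G"
    "((\<lambda>p. ubound (\<mu> p) (x p) (y p) n / marcum_ratio (\<mu> p) (x p) (y p) - 1) \<longlongrightarrow> 0) G"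
    by (rule Lim_null_comparison[OF eventually_mono[OF errors] assms(2)]; simp)+
  then show "((\<lambda>p. lbound (\<mu> p) (x p) (y p) n / marcum_ratio (\<mu> p) (x p) (y p)) \<longlongrightarrow> 1) G"
    "((\<lambda>p. ubound (\<mu> p) (x p) (y p) n / marcum_ratio (\<mu> p) (x p) (y p)) \<longlongrightarrow> 1) G"
    by (simp_all add: LIM_zero_cancel)
qed

lemma marcumF_ratio_tendsto_0_x:
  assumes "\<mu> > 0" "y > 0"
  shows "((\<lambda>x. marcumF (\<mu> + 1) x y / marcumF \<mu> x y) \<longlongrightarrow> 0) at_top"
proof (rule real_tendsto_sandwich[OF _ _ tendsto_const])
  have "((\<lambda>x. 2 * y / x + 4 * (\<mu> + 2) ^ 2 / x ^ 2) \<longlongrightarrow> 0) at_top"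
    by real_asymp
  from tendsto_real_sqrt[OF this]
  show "((\<lambda>x. sqrt (2 * y / x + 4 * (\<mu> + 2) ^ 2 / x ^ 2)) \<longlongrightarrow> 0) at_top"
    by simp
  show "\<forall>\<^sub>F x in at_top. 0 \<le> marcumF (\<mu> + 1) x y / marcumF \<mu> x y"
    "\<forall>\<^sub>F x in at_top. marcumF (\<mu> + 1) x y / marcumF \<mu> x y \<le> sqrt (2 * y / x + 4 * (\<mu> + 2) ^ 2 / x ^ 2)"
    using eventually_gt_at_top[of 0] by (eventually_elim; use assms in
      \<open>simp add: marcum_parameters.intro marcum_parameters.marcumF_ratio_le_sqrt
        marcum_parameters.marcumF_ratio_pos less_imp_le\<close>)+
qed

lemma marcumF_ratio_tendsto_0_y:
  assumes "\<mu> > 0" "x \<ge> 0"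
  shows "((\<lambda>y. marcumF (\<mu> + 1) x y / marcumF \<mu> x y) \<longlongrightarrow> 0) (at_right 0)"
proof (rule real_tendsto_sandwich[OF _ _ tendsto_const])
  show "((\<lambda>y. y / (\<mu> + 1)) \<longlongrightarrow> 0) (at_right 0)"
    using assms by real_asymp
  show "\<forall>\<^sub>F y in at_right 0. 0 \<le> marcumF (\<mu> + 1) x y / marcumF \<mu> x y"
    "\<forall>\<^sub>F y in at_right 0. marcumF (\<mu> + 1) x y / marcumF \<mu> x y \<le> y / (\<mu> + 1)"
    using eventually_at_right_less[of 0] by (eventually_elim; use assms in
      \<open>simp add: marcum_parameters.intro marcum_parameters.marcumF_ratio_le
        marcum_parameters.marcumF_ratio_pos less_imp_le\<close>)+
qed

lemma marcumF_ratio_tendsto_0_mu: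
  assumes "x \<ge> 0" "y > 0"
  shows "((\<lambda>\<mu>. marcumF (\<mu> + 1) x y / marcumF \<mu> x y) \<longlongrightarrow> 0) at_top"
proof (rule real_tendsto_sandwich[OF _ _ tendsto_const])
  show "((\<lambda>\<mu>. y / (\<mu> + 1)) \<longlongrightarrow> 0) at_top"
    by real_asymp
  show "\<forall>\<^sub>F \<mu> in at_top. 0 \<le> marcumF (\<mu> + 1) x y / marcumF \<mu> x y"
    "\<forall>\<^sub>F \<mu> in at_top. marcumF (\<mu> + 1) x y / marcumF \<mu> x y \<le> y / (\<mu> + 1)"
    using eventually_gt_at_top[of 0] by (eventually_elim; use assms in
      \<open>simp add: marcum_parameters.intro marcum_parameters.marcumF_ratio_le
        marcum_parameters.marcumF_ratio_pos less_imp_le\<close>)+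
qed

theorem theorem5:
  fixes \<mu> x y :: real
  assumes "\<mu> > 0" and "x \<ge> 0" and "y > 0"
  shows "(\<forall>n. lbound \<mu> x y n < marcum_ratio \<mu> x y \<and> marcum_ratio \<mu> x y < ubound \<mu> x y n)
    \<and> (\<lambda>n. lbound \<mu> x y n) \<longlonglongrightarrow> marcum_ratio \<mu> x y
    \<and> (\<lambda>n. ubound \<mu> x y n) \<longlonglongrightarrow> marcum_ratio \<mu> x y
    \<and> (\<forall>n. ((\<lambda>x'. lbound \<mu> x' y n / marcum_ratio \<mu> x' y) \<longlongrightarrow> 1) at_top
          \<and> ((\<lambda>x'. ubound \<mu> x' y n / marcum_ratio \<mu> x' y) \<longlongrightarrow> 1) at_top)
    \<and> (\<forall>n. ((\<lambda>y'. lbound \<mu> x y' n / marcum_ratio \<mu> x y') \<longlongrightarrow> 1) (at_right 0)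
          \<and> ((\<lambda>y'. ubound \<mu> x y' n / marcum_ratio \<mu> x y') \<longlongrightarrow> 1) (at_right 0))
    \<and> (\<forall>n. ((\<lambda>m. lbound m x y n / marcum_ratio m x y) \<longlongrightarrow> 1) at_top
          \<and> ((\<lambda>m. ubound m x y n / marcum_ratio m x y) \<longlongrightarrow> 1) at_top)"
proof -
  interpret marcum_parameters \<mu> x y
    using assms by unfold_locales
  have "eventually (\<lambda>x'::real. \<mu> > 0 \<and> x' \<ge> 0 \<and> y > 0) at_top"
    using assms by simp
  note large_x = bounds_ratio_tendsto_1[where \<mu>="\<lambda>_. \<mu>" and x="\<lambda>x'. x'" and y="\<lambda>_. y",
      OF this marcumF_ratio_tendsto_0_x[OF assms(1,3)]]
  have "eventually (\<lambda>y'::real. \<mu> > 0 \<and> x \<ge> 0 \<and> y' > 0) (at_right 0)"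
    using assms eventually_at_right_less[of 0] by (auto elim: eventually_mono)
  note small_y = bounds_ratio_tendsto_1[where \<mu>="\<lambda>_. \<mu>" and x="\<lambda>_. x" and y="\<lambda>y'. y'",
      OF this marcumF_ratio_tendsto_0_y[OF assms(1,2)]]
  have "eventually (\<lambda>m::real. m > 0 \<and> x \<ge> 0 \<and> y > 0) at_top"
    using assms eventually_gt_at_top[of 0] by (auto elim: eventually_mono)
  note large_mu = bounds_ratio_tendsto_1[where \<mu>="\<lambda>m. m" and x="\<lambda>_. x" and y="\<lambda>_. y",
      OF this marcumF_ratio_tendsto_0_mu[OF assms(2,3)]]
  show ?thesis
    using marcum_ratio_bounds bounds_tendsto_marcum_ratio large_x small_y large_mu by blast
qed

end
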